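(* Let $y \in L^2_{\mathbb{C}}(0,2)$ and suppose $x \in L^2_{\mathbb{C}}(0,1)$ satisfies $$\int_0^s x(s-q)\,x(q)\,dq = y(s) \quad \text{for almost all } s\in[0,2]$$ (with the convention that $x$ is extended by zero outside $[0,1]$). Then the set of all solutions $z\in L^2_{\mathbb{C}}(0,1)$ of this equation (i.e. $\int_0^s z(s-q)z(q)\,dq = y(s)$ for almost all $s\in[0,2]$) is exactly $\{x,-x\}$, where functions are identified if they agree almost everywhere.
   Context: $L^2_{\mathbb{C}}(0,a)$ denotes the Hilbert space of square-integrable complex-valued functions on $(0,a)$ with norm $\|z\|=\left(\int_0^a|z(q)|^2dq\right)^{1/2}$. Functions on $[0,1]$ are extended by zero to all of $\mathbb{R}$, so that for $1<s\le 2$ the integral $\int_0^s x(s-q)x(q)\,dq$ effectively runs over $q\in[s-1,1]$. This is the autoconvolution equation with constant kernel $k\equiv 1$. *)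

theory Defs
  imports "HOL-Analysis.Analysis"
begin

definition L2C :: "real \<Rightarrow> (real \<Rightarrow> complex) \<Rightarrow> bool" where
  "L2C a f \<longleftrightarrow> set_borel_measurable lborel {0<..<a} f \<and>
     set_integrable lborel {0<..<a} (\<lambda>q. (cmod (f q))^2)"

definition ext01 :: "(real \<Rightarrow> complex) \<Rightarrow> real \<Rightarrow> complex" where
  "ext01 f q = (if q \<in> {0..1} then f q else 0)"

definition autoconv :: "(real \<Rightarrow> complex) \<Rightarrow> real \<Rightarrow> complex" where
  "autoconv f s = (LINT q:{0..s}|lborel. ext01 f (s - q) * ext01 f q)"

definition solves_autoconv :: "(real \<Rightarrow> complex) \<Rightarrow> (real \<Rightarrow> complex) \<Rightarrow> bool" where
  "solves_autoconv y z \<longleftrightarrow> (AE s in lborel. s \<in> {0..2} \<longrightarrow> autoconv z s = y s)"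

end

theory Submission
  imports Defs "HOL-Library.Function_Algebras"
begin

text \<open>
  The moments of an integrable function vanishing outside a compact interval determine it almost
  everywhere: by Weierstrass approximation they determine its integrals over all half-lines, and
  these determine its density. The moment sequence of a convolution is the binomial convolution
  of the moment sequences, i.e. the coefficient sequence of the product of the exponential
  generating functions, and such products have no zero divisors. So if \<open>x * x = z * z\<close>,
  then \<open>(m\<^sub>x - m\<^sub>z)(m\<^sub>x + m\<^sub>z) = 0\<close> for the moment sequences, whence
  \<open>m\<^sub>z = \<plusminus>m\<^sub>x\<close> and \<open>z = \<plusminus>x\<close> almost everywhere.
\<close>

lemma emeasure_density_greaterThan:
  fixes g :: "real \<Rightarrow> real"
  assumes g: "integrable lborel g"
  shows "emeasure (density lborel (\<lambda>t. ennreal (g t))) {a<..} =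
           ennreal (LINT t:{a<..}|lborel. max 0 (g t))"
proof -
  have [measurable]: "g \<in> borel_measurable borel" using g by auto
  have "emeasure (density lborel (\<lambda>t. ennreal (g t))) {a<..} =
          (\<integral>\<^sup>+ t. ennreal (indicator {a<..} t * max 0 (g t)) \<partial>lborel)"
    by (subst emeasure_density)
       (auto intro!: nn_integral_cong simp: indicator_def max_def ennreal_neg)
  also have "\<dots> = ennreal (LINT t:{a<..}|lborel. max 0 (g t))"
    unfolding set_lebesgue_integral_def
    by (subst nn_integral_eq_integral)
       (auto intro!: Bochner_Integration.integrable_bound[OF integrable_norm[OF g]]
             simp: indicator_def abs_ge_self)
  finally show ?thesis .
qed

lemma AE_zero_if_integrals_greaterThan_zero:
  fixes f :: "real \<Rightarrow> real"
  assumes f: "integrable lborel f" and zero: "\<And>a. (LINT t:{a<..}|lborel. f t) = 0"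
  shows "AE t in lborel. f t = 0"
proof -
  have [measurable]: "f \<in> borel_measurable borel" using f by auto
  have f': "integrable lborel (\<lambda>t. - f t)" using f by auto
  have "density lborel (\<lambda>t. ennreal (f t)) = density lborel (\<lambda>t. ennreal (- f t))"
  proof (rule measure_eqI_lessThan)
    fix a :: real
    show "emeasure (density lborel (\<lambda>t. ennreal (f t))) {a<..} < \<infinity>"
      using emeasure_density_greaterThan[OF f] by simp
    have int: "set_integrable lborel {a<..} (\<lambda>t. max 0 (h t))"
      if "integrable lborel h" for h :: "real \<Rightarrow> real"
      unfolding set_integrable_def
      by (rule Bochner_Integration.integrable_bound[OF integrable_norm[OF that]])
         (use that in \<open>auto simp: indicator_def\<close>)
    have "(LINT t:{a<..}|lborel. f t) =
            (LINT t:{a<..}|lborel. max 0 (f t)) - (LINT t:{a<..}|lborel. max 0 (- f t))"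
      by (subst set_integral_diff(2)[symmetric]) (auto intro!: int f f' set_lebesgue_integral_cong)
    then show "emeasure (density lborel (\<lambda>t. ennreal (f t))) {a<..} =
               emeasure (density lborel (\<lambda>t. ennreal (- f t))) {a<..}"
      using zero[of a]
      by (simp add: emeasure_density_greaterThan[OF f] emeasure_density_greaterThan[OF f'])
  qed auto
  then have "AE t in lborel. ennreal (f t) = ennreal (- f t)"
    by (intro sigma_finite_measure.density_unique[OF sigma_finite_lborel]) auto
  then show ?thesis
    by eventually_elim
      (metis ennreal_neg linorder_le_cases neg_0_le_iff_le neg_le_0_iff_le ennreal_eq_0_iff
        order.antisym)
qed

definition moment :: "nat \<Rightarrow> (real \<Rightarrow> complex) \<Rightarrow> complex" where
  "moment k f = (\<integral>t. of_real t ^ k * f t \<partial>lborel)"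

lemma integrable_power_mult:
  fixes f :: "real \<Rightarrow> complex"
  assumes f: "integrable lborel f" and supp: "\<And>t. t \<notin> {a..b} \<Longrightarrow> f t = 0"
  shows "integrable lborel (\<lambda>t. of_real t ^ k * f t)"
proof (rule Bochner_Integration.integrable_bound)
  show "integrable lborel (\<lambda>t. max \<bar>a\<bar> \<bar>b\<bar> ^ k * norm (f t))"
    using f by auto
  show "(\<lambda>t. of_real t ^ k * f t) \<in> borel_measurable lborel"
    using f by auto
  show "AE t in lborel. norm (of_real t ^ k * f t) \<le> norm (max \<bar>a\<bar> \<bar>b\<bar> ^ k * norm (f t))"
  proof (rule AE_I2)
    fix t
    show "norm (of_real t ^ k * f t) \<le> norm (max \<bar>a\<bar> \<bar>b\<bar> ^ k * norm (f t))"
    proof (cases "t \<in> {a..b}")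
      case True
      then have "\<bar>t\<bar> ^ k \<le> max \<bar>a\<bar> \<bar>b\<bar> ^ k" by (intro power_mono) auto
      then show ?thesis by (simp add: norm_mult norm_power mult_right_mono)
    qed (simp add: supp)
  qed
qed

lemma integral_polynomial_mult_eq_0:
  fixes f :: "real \<Rightarrow> complex"
  assumes f: "integrable lborel f" and supp: "\<And>t. t \<notin> {a..b} \<Longrightarrow> f t = 0"
    and zero: "\<And>k. moment k f = 0" and p: "real_polynomial_function p"
  shows "(\<integral>t. of_real (p t) * f t \<partial>lborel) = 0"
proof -
  obtain c n where p_eq: "p = (\<lambda>t. \<Sum>i\<le>n. c i * t ^ i)"
    using p real_polynomial_function_iff_sum by blast
  have "(\<integral>t. of_real (p t) * f t \<partial>lborel) =
          (\<integral>t. (\<Sum>i\<le>n. of_real (c i) * (of_real t ^ i * f t)) \<partial>lborel)"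
    by (simp add: p_eq sum_distrib_right mult.assoc)
  also have "\<dots> = (\<Sum>i\<le>n. of_real (c i) * moment i f)"
    unfolding moment_def
    by (subst Bochner_Integration.integral_sum)
       (auto intro: integrable_power_mult[OF f supp] simp: integral_mult_right_zero)
  finally show ?thesis using zero by simp
qed

lemma real_polynomials_tendsto_indicator_greaterThan:
  fixes a b c :: real
  obtains p :: "nat \<Rightarrow> real \<Rightarrow> real"
  where "\<And>k. real_polynomial_function (p k)"
    and "\<And>k t. t \<in> {a..b} \<Longrightarrow> \<bar>p k t\<bar> \<le> 2"
    and "\<And>t. t \<in> {a..b} \<Longrightarrow> (\<lambda>k. p k t) \<longlonglongrightarrow> indicator {c<..} t"
proof -
  define \<phi> where "\<phi> k t = max 0 (min 1 ((t - c) * real (Suc k)))" for k t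
  have \<phi>_lim: "(\<lambda>k. \<phi> k t) \<longlonglongrightarrow> indicator {c<..} t" for t
  proof (cases "c < t")
    case True
    obtain N :: nat where N: "inverse (t - c) < real N"
      using reals_Archimedean2 by blast
    have "\<phi> k t = 1" if "k \<ge> N" for k
    proof -
      have "1 < (t - c) * real N" using N True by (simp add: field_simps)
      also have "\<dots> \<le> (t - c) * real (Suc k)" using that True by (intro mult_left_mono) auto
      finally show ?thesis unfolding \<phi>_def by simp
    qed
    then show ?thesis
      using True by (intro tendsto_eventually) (auto simp: eventually_sequentially)
  next
    case False
    have "\<phi> k t = 0" for k
    proof -
      have "(t - c) * real (Suc k) \<le> 0" using False by (intro mult_nonpos_nonneg) auto
      then show ?thesis unfolding \<phi>_def by (simp add: min_def max_def)
    qed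
    then show ?thesis using False by simp
  qed
  have "\<exists>p. real_polynomial_function p \<and>
             (\<forall>t\<in>{a..b}. \<bar>\<phi> k t - p t\<bar> < inverse (Suc k))" for k
  proof -
    have cont: "continuous_on {a..b} (\<phi> k)" unfolding \<phi>_def by (intro continuous_intros)
    obtain p where "real_polynomial_function p"
      "\<And>t. t \<in> {a..b} \<Longrightarrow> \<bar>\<phi> k t - p t\<bar> < inverse (Suc k)"
      by (rule Stone_Weierstrass_real_polynomial_function[OF compact_Icc cont]) auto
    then show ?thesis by blast
  qed
  then obtain p where p_poly: "\<And>k. real_polynomial_function (p k)"
    and p_approx: "\<And>k t. t \<in> {a..b} \<Longrightarrow> \<bar>\<phi> k t - p k t\<bar> < inverse (Suc k)"
    by metis
  show thesis
  proof (rule that[OF p_poly])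
    fix k t assume t: "t \<in> {a..b}"
    have "\<bar>\<phi> k t\<bar> \<le> 1" "inverse (real (Suc k)) \<le> 1"
      by (auto simp: \<phi>_def inverse_le_1_iff)
    then show "\<bar>p k t\<bar> \<le> 2" using p_approx[OF t, of k] by linarith
  next
    fix t assume t: "t \<in> {a..b}"
    have "(\<lambda>k. p k t - \<phi> k t) \<longlonglongrightarrow> 0"
      by (rule Lim_null_comparison[OF _ LIMSEQ_inverse_real_of_nat])
         (use p_approx[OF t] in \<open>auto intro!: always_eventually less_imp_le simp: abs_minus_commute\<close>)
    from tendsto_add[OF \<phi>_lim[of t] this]
    show "(\<lambda>k. p k t) \<longlonglongrightarrow> indicator {c<..} t" by simp
  qed
qed

lemma set_integral_greaterThan_eq_0_if_moments_zero:
  fixes f :: "real \<Rightarrow> complex"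
  assumes f: "integrable lborel f" and supp: "\<And>t. t \<notin> {a..b} \<Longrightarrow> f t = 0"
    and zero: "\<And>k. moment k f = 0"
  shows "(LINT t:{c<..}|lborel. f t) = 0"
proof -
  obtain p where p_poly: "\<And>k. real_polynomial_function (p k)"
    and p_bound: "\<And>k t. t \<in> {a..b} \<Longrightarrow> \<bar>p k t\<bar> \<le> 2"
    and p_lim: "\<And>t. t \<in> {a..b} \<Longrightarrow> (\<lambda>k. p k t) \<longlonglongrightarrow> indicator {c<..} t"
    using real_polynomials_tendsto_indicator_greaterThan[of a b c] by metis
  have [measurable]: "p k \<in> borel_measurable borel" for k
    using continuous_real_polymonial_function[OF p_poly]
    by (intro borel_measurable_continuous_onI continuous_at_imp_continuous_on) auto
  have "(\<lambda>k. \<integral>t. of_real (p k t) * f t \<partial>lborel) \<longlonglongrightarrow> (LINT t:{c<..}|lborel. f t)"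
    unfolding set_lebesgue_integral_def scaleR_conv_of_real
  proof (rule integral_dominated_convergence[where w="\<lambda>t. 2 * norm (f t)"])
    show "AE t in lborel. norm (of_real (p k t) * f t) \<le> 2 * norm (f t)" for k
      using p_bound supp
      by (intro AE_I2, case_tac "t \<in> {a..b}") (auto simp: norm_mult intro: mult_right_mono)
    show "AE t in lborel. (\<lambda>k. of_real (p k t) * f t) \<longlonglongrightarrow> of_real (indicator {c<..} t) * f t"
      using p_lim supp by (intro AE_I2, case_tac "t \<in> {a..b}") (auto intro!: tendsto_intros)
  qed (use f in auto)
  moreover have "(\<integral>t. of_real (p k t) * f t \<partial>lborel) = 0" for k
    by (rule integral_polynomial_mult_eq_0[OF f supp zero p_poly])
  ultimately show ?thesis by (simp add: LIMSEQ_const_iff)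
qed

lemma AE_zero_if_moments_zero:
  fixes f :: "real \<Rightarrow> complex"
  assumes f: "integrable lborel f" and supp: "\<And>t. t \<notin> {a..b} \<Longrightarrow> f t = 0"
    and zero: "\<And>k. moment k f = 0"
  shows "AE t in lborel. f t = 0"
proof -
  have int: "integrable lborel (\<lambda>t. indicator {c<..} t *\<^sub>R f t)" for c
    using f by (rule integrable_mult_indicator[rotated]) simp
  have "AE t in lborel. Re (f t) = 0"
  proof (rule AE_zero_if_integrals_greaterThan_zero)
    show "(LINT t:{c<..}|lborel. Re (f t)) = 0" for c
      using integral_Re[OF int]
        set_integral_greaterThan_eq_0_if_moments_zero[where a=a and b=b and c=c, OF f supp zero]
      by (simp add: set_lebesgue_integral_def)
  qed (use f in auto)
  moreover have "AE t in lborel. Im (f t) = 0"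
  proof (rule AE_zero_if_integrals_greaterThan_zero)
    show "(LINT t:{c<..}|lborel. Im (f t)) = 0" for c
      using integral_Im[OF int]
        set_integral_greaterThan_eq_0_if_moments_zero[where a=a and b=b and c=c, OF f supp zero]
      by (simp add: set_lebesgue_integral_def)
  qed (use f in auto)
  ultimately show ?thesis by eventually_elim (simp add: complex_eq_iff)
qed

lemma AE_eq_if_moments_eq:
  fixes f g :: "real \<Rightarrow> complex"
  assumes f: "integrable lborel f" and supp_f: "\<And>t. t \<notin> {a..b} \<Longrightarrow> f t = 0"
    and g: "integrable lborel g" and supp_g: "\<And>t. t \<notin> {a..b} \<Longrightarrow> g t = 0"
    and eq: "\<And>k. moment k f = moment k g"
  shows "AE t in lborel. f t = g t"
proof -
  have "moment k (\<lambda>t. f t - g t) = moment k f - moment k g" for k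
    unfolding moment_def
    using Bochner_Integration.integral_diff[OF integrable_power_mult[OF f supp_f]
        integrable_power_mult[OF g supp_g]]
    by (simp add: algebra_simps)
  then have "AE t in lborel. f t - g t = 0"
    using f g supp_f supp_g eq by (intro AE_zero_if_moments_zero[where a=a and b=b]) auto
  then show ?thesis by simp
qed

text \<open>The coefficients of a product of exponential generating functions.\<close>

definition binomial_convolution ::
    "(nat \<Rightarrow> 'a::comm_semiring_1) \<Rightarrow> (nat \<Rightarrow> 'a) \<Rightarrow> nat \<Rightarrow> 'a" where
  "binomial_convolution d e n = (\<Sum>k\<le>n. of_nat (n choose k) * d (n - k) * e k)"

lemma binomial_convolution_commute:
  "binomial_convolution d e = binomial_convolution e d"
proof
  fix n
  have "binomial_convolution d e n =
          (\<Sum>k\<le>n. of_nat (n choose (n - k)) * d (n - k) * e (n - (n - k)))"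
    unfolding binomial_convolution_def
    by (intro sum.cong refl) (simp add: binomial_symmetric[symmetric])
  also have "\<dots> = (\<Sum>k\<le>n. of_nat (n choose k) * d k * e (n - k))"
    by (rule sum.reindex_bij_witness[where i="\<lambda>k. n - k" and j="\<lambda>k. n - k"]) auto
  finally show "binomial_convolution d e n = binomial_convolution e d n"
    unfolding binomial_convolution_def by (simp add: mult_ac)
qed

lemma binomial_convolution_eq_0_imp:
  fixes d e :: "nat \<Rightarrow> 'a::{idom, ring_char_0}"
  assumes "binomial_convolution d e = 0"
  shows "d = 0 \<or> e = 0"
proof (rule ccontr)
  assume "\<not> (d = 0 \<or> e = 0)"
  then obtain p0 r0 where "d p0 \<noteq> 0" "e r0 \<noteq> 0" by (auto simp: fun_eq_iff)
  define p where "p = (LEAST k. d k \<noteq> 0)"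
  define r where "r = (LEAST k. e k \<noteq> 0)"
  have "d p \<noteq> 0" "e r \<noteq> 0"
    unfolding p_def r_def by (rule LeastI, fact)+
  have d_below: "d k = 0" if "k < p" for k using that not_less_Least unfolding p_def by blast
  have e_below: "e k = 0" if "k < r" for k using that not_less_Least unfolding r_def by blast
  have "binomial_convolution d e (p + r) =
          (\<Sum>k\<in>{r}. of_nat ((p + r) choose k) * d (p + r - k) * e k)"
    unfolding binomial_convolution_def
  proof (rule sum.mono_neutral_right)
    show "\<forall>k\<in>{..p + r} - {r}. of_nat ((p + r) choose k) * d (p + r - k) * e k = 0"
    proof
      fix k assume "k \<in> {..p + r} - {r}"
      then have "k < r \<or> p + r - k < p" by auto
      then show "of_nat ((p + r) choose k) * d (p + r - k) * e k = 0"
        using d_below e_below by auto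
    qed
  qed auto
  also have "\<dots> \<noteq> 0"
    using \<open>d p \<noteq> 0\<close> \<open>e r \<noteq> 0\<close> by simp
  finally show False using assms by simp
qed

lemma binomial_convolution_self_eq_imp:
  fixes d e :: "nat \<Rightarrow> 'a::{idom, ring_char_0}"
  assumes eq: "binomial_convolution d d = binomial_convolution e e"
  shows "d = e \<or> d = - e"
proof -
  have "binomial_convolution (d - e) (d + e) n =
          binomial_convolution d d n - binomial_convolution e e n
          + (binomial_convolution d e n - binomial_convolution e d n)" for n
    unfolding binomial_convolution_def
    by (simp add: sum_subtractf[symmetric] sum.distrib[symmetric] algebra_simps)
  then have "binomial_convolution (d - e) (d + e) = 0"
    using eq binomial_convolution_commute[of d e] by (simp add: fun_eq_iff)
  then have "d - e = 0 \<or> d + e = 0"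
    by (rule binomial_convolution_eq_0_imp)
  then show ?thesis by (auto simp: fun_eq_iff eq_neg_iff_add_eq_0)
qed

definition convolution ::
    "(real \<Rightarrow> complex) \<Rightarrow> (real \<Rightarrow> complex) \<Rightarrow> real \<Rightarrow> complex" where
  "convolution f g s = (\<integral>q. f (s - q) * g q \<partial>lborel)"

lemma integrable_convolution_kernel:
  fixes f g :: "real \<Rightarrow> complex"
  assumes f: "integrable lborel f" and g: "integrable lborel g"
  shows "integrable (lborel \<Otimes>\<^sub>M lborel) (\<lambda>(s, q). f (s - q) * g q)"
proof -
  have [measurable]: "f \<in> borel_measurable borel" "g \<in> borel_measurable borel"
    using f g by auto
  have "(\<integral>s. norm (f (s - q) * g q) \<partial>lborel) = norm (g q) * (\<integral>t. norm (f t) \<partial>lborel)" for q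
    using lborel_integral_real_affine[of 1 "\<lambda>t. norm (f t)" "-q"] by (simp add: norm_mult)
  moreover have "integrable lborel (\<lambda>s. f (s - q))" for q
    using lborel_integrable_real_affine[OF f, of 1 "- q"] by simp
  ultimately have "integrable (lborel \<Otimes>\<^sub>M lborel) (\<lambda>(q, s). f (s - q) * g q)"
    using g by (intro lborel_pair.Fubini_integrable) (auto intro!: integrable_mult_left)
  from lborel_pair.integrable_product_swap[OF this] show ?thesis
    by (simp add: case_prod_beta)
qed

lemma borel_measurable_convolution [measurable]:
  assumes [measurable]: "f \<in> borel_measurable borel" "g \<in> borel_measurable borel"
  shows "convolution f g \<in> borel_measurable borel"
  unfolding convolution_def by measurable

lemma convolution_eq_0_outside:
  assumes "\<And>t. t \<notin> {a..b} \<Longrightarrow> f t = 0" "\<And>t. t \<notin> {a..b} \<Longrightarrow> g t = 0"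
    and "s \<notin> {a + a..b + b}"
  shows "convolution f g s = 0"
proof -
  have "f (s - q) * g q = 0" for q
    using assms by (cases "q \<in> {a..b}") auto
  then show ?thesis unfolding convolution_def by (simp only:) simp
qed

lemma convolution_cong_AE:
  assumes [measurable]: "f \<in> borel_measurable borel" "f' \<in> borel_measurable borel"
      "g \<in> borel_measurable borel" "g' \<in> borel_measurable borel"
    and f_eq: "AE t in lborel. f t = f' t" and g_eq: "AE t in lborel. g t = g' t"
  shows "convolution f g s = convolution f' g' s"
proof -
  have "AE q in lborel. f (s + (-1) * q) = f' (s + (-1) * q)"
    by (rule AE_borel_affine[OF _ _ f_eq]) auto
  with g_eq show ?thesis
    unfolding convolution_def
    by (intro integral_cong_AE) (measurable, measurable, auto elim: eventually_elim2)
qed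

lemma moment_shift:
  fixes f :: "real \<Rightarrow> complex"
  assumes f: "integrable lborel f" and supp: "\<And>t. t \<notin> {a..b} \<Longrightarrow> f t = 0"
  shows "moment n (\<lambda>s. f (s - q)) = (\<Sum>k\<le>n. of_nat (n choose k) * of_real q ^ k * moment (n - k) f)"
proof -
  have "moment n (\<lambda>s. f (s - q)) = (\<integral>t. of_real (q + 1 * t) ^ n * f t \<partial>lborel)"
    unfolding moment_def
    using lborel_integral_real_affine[of 1 "\<lambda>s. of_real s ^ n * f (s - q)" q] by simp
  also have "\<dots> = (\<integral>t. (\<Sum>k\<le>n. (of_nat (n choose k) * of_real q ^ k) *
                                 (of_real t ^ (n - k) * f t)) \<partial>lborel)"
    by (simp add: binomial_ring sum_distrib_left mult_ac)
  also have "\<dots> = (\<Sum>k\<le>n. (\<integral>t. (of_nat (n choose k) * of_real q ^ k) *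
                                 (of_real t ^ (n - k) * f t) \<partial>lborel))"
    by (intro Bochner_Integration.integral_sum integrable_mult_right integrable_power_mult[OF f supp])
  finally show ?thesis
    by (simp only: integral_mult_right_zero) (simp add: moment_def)
qed

lemma integrable_power_mult_convolution_kernel:
  fixes f g :: "real \<Rightarrow> complex"
  assumes f: "integrable lborel f" and supp_f: "\<And>t. t \<notin> {a..b} \<Longrightarrow> f t = 0"
    and g: "integrable lborel g" and supp_g: "\<And>t. t \<notin> {a..b} \<Longrightarrow> g t = 0"
  shows "integrable (lborel \<Otimes>\<^sub>M lborel) (\<lambda>(s, q). of_real s ^ n * (f (s - q) * g q))"
proof (rule Bochner_Integration.integrable_bound)
  have [measurable]: "f \<in> borel_measurable borel" "g \<in> borel_measurable borel"
    using f g by auto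
  show "(\<lambda>(s, q). of_real s ^ n * (f (s - q) * g q)) \<in> borel_measurable (lborel \<Otimes>\<^sub>M lborel)"
    by measurable
  show "integrable (lborel \<Otimes>\<^sub>M lborel)
      (\<lambda>(s, q). (2 * max \<bar>a\<bar> \<bar>b\<bar>) ^ n * norm (f (s - q) * g q))"
    using integrable_norm[OF integrable_convolution_kernel[OF f g]]
    unfolding case_prod_beta by (rule integrable_mult_right)
  show "AE p in lborel \<Otimes>\<^sub>M lborel. norm ((\<lambda>(s, q). of_real s ^ n * (f (s - q) * g q)) p) \<le>
          norm ((\<lambda>(s, q). (2 * max \<bar>a\<bar> \<bar>b\<bar>) ^ n * norm (f (s - q) * g q)) p)"
  proof (rule AE_I2, clarify)
    fix s q
    show "norm (of_real s ^ n * (f (s - q) * g q)) \<le>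
            norm ((2 * max \<bar>a\<bar> \<bar>b\<bar>) ^ n * norm (f (s - q) * g q))"
    proof (cases "s - q \<in> {a..b} \<and> q \<in> {a..b}")
      case True
      then have "\<bar>s\<bar> ^ n \<le> (2 * max \<bar>a\<bar> \<bar>b\<bar>) ^ n" by (intro power_mono) auto
      then show ?thesis by (simp add: norm_mult norm_power mult_right_mono)
    qed (auto simp: supp_f supp_g)
  qed
qed

lemma moment_convolution:
  fixes f g :: "real \<Rightarrow> complex"
  assumes f: "integrable lborel f" and supp_f: "\<And>t. t \<notin> {a..b} \<Longrightarrow> f t = 0"
    and g: "integrable lborel g" and supp_g: "\<And>t. t \<notin> {a..b} \<Longrightarrow> g t = 0"
  shows "moment n (convolution f g) = binomial_convolution (\<lambda>k. moment k f) (\<lambda>k. moment k g) n"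
proof -
  have "moment n (convolution f g) =
          (\<integral>s. (\<integral>q. of_real s ^ n * (f (s - q) * g q) \<partial>lborel) \<partial>lborel)"
    unfolding moment_def convolution_def by simp
  also have "\<dots> = (\<integral>q. (\<integral>s. of_real s ^ n * (f (s - q) * g q) \<partial>lborel) \<partial>lborel)"
    using lborel_pair.Fubini_integral[OF integrable_power_mult_convolution_kernel[OF f supp_f g supp_g]]
    by simp
  also have "\<dots> = (\<integral>q. (\<Sum>k\<le>n. of_nat (n choose k) * moment (n - k) f *
                                 (of_real q ^ k * g q)) \<partial>lborel)"
    using moment_shift[OF f supp_f] by (simp add: moment_def sum_distrib_left mult_ac)
  also have "\<dots> = (\<Sum>k\<le>n. of_nat (n choose k) * moment (n - k) f * moment k g)"
    unfolding moment_def
    by (subst Bochner_Integration.integral_sum) (auto intro: integrable_power_mult[OF g supp_g])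
  finally show ?thesis unfolding binomial_convolution_def .
qed

lemma AE_eq_or_AE_eq_neg_if_self_convolution_eq:
  fixes f g :: "real \<Rightarrow> complex"
  assumes f: "integrable lborel f" and supp_f: "\<And>t. t \<notin> {a..b} \<Longrightarrow> f t = 0"
    and g: "integrable lborel g" and supp_g: "\<And>t. t \<notin> {a..b} \<Longrightarrow> g t = 0"
    and eq: "AE s in lborel. convolution f f s = convolution g g s"
  shows "(AE t in lborel. f t = g t) \<or> (AE t in lborel. f t = - g t)"
proof -
  have [measurable]: "f \<in> borel_measurable borel" "g \<in> borel_measurable borel"
    using f g by auto
  have "binomial_convolution (\<lambda>k. moment k f) (\<lambda>k. moment k f) n =
        binomial_convolution (\<lambda>k. moment k g) (\<lambda>k. moment k g) n" for n
  proof -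
    have "moment n (convolution f f) = moment n (convolution g g)"
      unfolding moment_def using eq by (intro integral_cong_AE) auto
    then show ?thesis
      using moment_convolution[where a=a and b=b, OF f supp_f f supp_f]
        moment_convolution[where a=a and b=b, OF g supp_g g supp_g] by simp
  qed
  then have "binomial_convolution (\<lambda>k. moment k f) (\<lambda>k. moment k f) =
             binomial_convolution (\<lambda>k. moment k g) (\<lambda>k. moment k g)" ..
  then have "(\<lambda>k. moment k f) = (\<lambda>k. moment k g) \<or> (\<lambda>k. moment k f) = - (\<lambda>k. moment k g)"
    by (rule binomial_convolution_self_eq_imp)
  moreover have "moment k (\<lambda>t. - g t) = - moment k g" for k
    unfolding moment_def by (simp flip: integral_minus)
  ultimately consider "\<And>k. moment k f = moment k g" | "\<And>k. moment k f = moment k (\<lambda>t. - g t)"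
    by (auto simp: fun_eq_iff)
  then show ?thesis
  proof cases
    case 1
    with f supp_f g supp_g have "AE t in lborel. f t = g t"
      by (rule AE_eq_if_moments_eq)
    then show ?thesis ..
  next
    case 2
    with f supp_f g supp_g have "AE t in lborel. f t = - g t"
      by (intro AE_eq_if_moments_eq[where a=a and b=b]) auto
    then show ?thesis ..
  qed
qed

lemma integrable_ext01:
  assumes "L2C 1 f"
  shows "integrable lborel (ext01 f)"
proof -
  have [measurable]: "(\<lambda>t. indicator {0<..<1} t *\<^sub>R f t) \<in> borel_measurable borel"
    and sq: "integrable lborel (\<lambda>t. indicator {0<..<1} t *\<^sub>R (cmod (f t))\<^sup>2)"
    using assms by (auto simp: L2C_def set_borel_measurable_def set_integrable_def)
  have "integrable lborel (\<lambda>t. indicator {0<..<1} t *\<^sub>R f t)"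
  proof (rule Bochner_Integration.integrable_bound)
    show "integrable lborel (\<lambda>t. indicator {0<..<1} t + indicator {0<..<1} t *\<^sub>R (cmod (f t))\<^sup>2)"
      using sq by (intro Bochner_Integration.integrable_add) auto
    have "cmod (f t) \<le> 1 + (cmod (f t))\<^sup>2" for t
      using zero_le_power2[of "cmod (f t) - 1"] norm_ge_zero[of "f t"]
      unfolding power2_diff power_one by linarith
    then show "AE t in lborel. norm (indicator {0<..<1} t *\<^sub>R f t) \<le>
        norm (indicator {0<..<1} t + indicator {0<..<1} t *\<^sub>R (cmod (f t))\<^sup>2 :: real)"
      by (intro AE_I2) (simp add: indicator_def)
  qed simp
  moreover have "ext01 f = (\<lambda>t. indicator {0<..<1} t *\<^sub>R f t +
                              indicator {0} t *\<^sub>R f 0 + indicator {1} t *\<^sub>R f 1)"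
    by (auto simp: ext01_def indicator_def fun_eq_iff)
  then have "ext01 f \<in> borel_measurable borel"
    by simp
  moreover have "AE t in lborel. indicator {0<..<1} t *\<^sub>R f t = ext01 f t"
    using AE_lborel_singleton[of 0] AE_lborel_singleton[of 1]
    by eventually_elim (auto simp: ext01_def)
  ultimately show ?thesis by (auto intro: integrable_cong_AE_imp)
qed

lemma ext01_eq_0: "t \<notin> {0..1} \<Longrightarrow> ext01 f t = 0"
  unfolding ext01_def by auto

lemma AE_ext01_iff:
  assumes "P 0 0"
  shows "(AE t in lborel. P (ext01 z t) (ext01 x t)) \<longleftrightarrow>
         (AE t in lborel. t \<in> {0<..<1} \<longrightarrow> P (z t) (x t))"
proof (rule eventually_cong)
  show "AE t in lborel. t \<noteq> 0 \<and> t \<noteq> 1"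
    using AE_lborel_singleton[of 0] AE_lborel_singleton[of 1] by eventually_elim auto
qed (use assms in \<open>auto simp: ext01_def\<close>)

lemma autoconv_eq_convolution: "autoconv f s = convolution (ext01 f) (ext01 f) s"
  unfolding autoconv_def convolution_def set_lebesgue_integral_def
  by (intro Bochner_Integration.integral_cong) (auto simp: ext01_def indicator_def)

lemma solves_autoconv_iff:
  assumes "solves_autoconv y x"
  shows "solves_autoconv y z \<longleftrightarrow> (AE s in lborel. autoconv z s = autoconv x s)"
proof -
  have outside: "autoconv f s = 0" if "s \<notin> {0..2}" for f s
    using convolution_eq_0_outside[of 0 1 "ext01 f" "ext01 f" s] that
    by (simp add: autoconv_eq_convolution ext01_eq_0)
  from assms show ?thesis
    unfolding solves_autoconv_def
  proof (rule eventually_cong)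
    fix s assume "s \<in> {0..2} \<longrightarrow> autoconv x s = y s"
    then show "(s \<in> {0..2} \<longrightarrow> autoconv z s = y s) \<longleftrightarrow> autoconv z s = autoconv x s"
      using outside by (cases "s \<in> {0..2}") auto
  qed
qed

lemma AE_autoconv_eq_iff:
  assumes x: "L2C 1 x" and z: "L2C 1 z"
  shows "(AE s in lborel. autoconv z s = autoconv x s) \<longleftrightarrow>
         (AE t in lborel. t \<in> {0<..<1} \<longrightarrow> z t = x t) \<or>
         (AE t in lborel. t \<in> {0<..<1} \<longrightarrow> z t = - x t)"
proof -
  have X: "integrable lborel (ext01 x)" and Z: "integrable lborel (ext01 z)"
    using integrable_ext01 x z by auto
  then have [measurable]: "ext01 x \<in> borel_measurable borel" "ext01 z \<in> borel_measurable borel"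
    by auto
  have "(AE s in lborel. autoconv z s = autoconv x s) \<longleftrightarrow>
        (AE t in lborel. ext01 z t = ext01 x t) \<or> (AE t in lborel. ext01 z t = - ext01 x t)"
  proof
    assume "AE s in lborel. autoconv z s = autoconv x s"
    then show "(AE t in lborel. ext01 z t = ext01 x t) \<or> (AE t in lborel. ext01 z t = - ext01 x t)"
      by (intro AE_eq_or_AE_eq_neg_if_self_convolution_eq[OF Z _ X, where a=0 and b=1])
         (auto simp: autoconv_eq_convolution ext01_eq_0)
  next
    assume "(AE t in lborel. ext01 z t = ext01 x t) \<or> (AE t in lborel. ext01 z t = - ext01 x t)"
    then have "convolution (ext01 z) (ext01 z) s = convolution (ext01 x) (ext01 x) s" for s
    proof
      assume "AE t in lborel. ext01 z t = - ext01 x t"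
      then have "convolution (ext01 z) (ext01 z) s = convolution (\<lambda>t. - ext01 x t) (\<lambda>t. - ext01 x t) s"
        by (intro convolution_cong_AE) auto
      then show ?thesis by (simp add: convolution_def)
    qed (intro convolution_cong_AE; simp)
    then show "AE s in lborel. autoconv z s = autoconv x s"
      by (simp add: autoconv_eq_convolution)
  qed
  also have "\<dots> \<longleftrightarrow> (AE t in lborel. t \<in> {0<..<1} \<longrightarrow> z t = x t) \<or>
                    (AE t in lborel. t \<in> {0<..<1} \<longrightarrow> z t = - x t)"
    using AE_ext01_iff[of "\<lambda>u v. u = v"] AE_ext01_iff[of "\<lambda>u v. u = - v"] by simp
  finally show ?thesis .
qed

theorem theorem1:
  fixes x y :: "real \<Rightarrow> complex"
  assumes "L2C 2 y" and "L2C 1 x" and "solves_autoconv y x"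
  shows "{z. L2C 1 z \<and> solves_autoconv y z} =
         {z. L2C 1 z \<and> ((AE q in lborel. q \<in> {0<..<1} \<longrightarrow> z q = x q) \<or>
                          (AE q in lborel. q \<in> {0<..<1} \<longrightarrow> z q = - x q))}"
proof (intro Collect_cong conj_cong refl)
  fix z assume "L2C 1 z"
  then show "solves_autoconv y z \<longleftrightarrow>
      (AE q in lborel. q \<in> {0<..<1} \<longrightarrow> z q = x q) \<or>
      (AE q in lborel. q \<in> {0<..<1} \<longrightarrow> z q = - x q)"
    using solves_autoconv_iff[OF assms(3)] AE_autoconv_eq_iff[OF assms(2)] by simp
qed

end
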